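(* Let $G_1=(V,E_1)$, $G_2=(V,E_2)$, $G_3=(V,E_3)$ be simple graphs on a common vertex set $V$ with $|V|=m$ and $E_1\cap E_2=E_1\cap E_3=\emptyset$. Let $\delta_1$ be the minimum degree of $G_1$, and $\Delta_2,\Delta_3$ the maximum degrees of $G_2,G_3$. Let $\ell\geq 2$ be an integer. Suppose $$m\cdot\frac{3\ell-1}{3\ell}\leq \delta_1 \qquad\text{and}\qquad \Delta_2\Delta_3\leq \frac{m-3}{15\ell^2}.$$ Then there are $\lfloor m/\ell\rfloor$ pairwise vertex-disjoint copies of $K_\ell$ in $G_1$ such that no two of them form an alternating-$(\ell,2,\ell,2)$-bag with $G_2$ and $G_3$.
   Context: Two vertex-disjoint copies $A_1,A_2$ of $K_\ell$ in $G_1$ form an alternating-$(\ell,2,\ell,2)$-bag with $G_2$ and $G_3$ if there exist two vertex-disjoint edges $e_2\in E_2$ and $e_3\in E_3$ each of which joins a vertex of $A_1$ to a vertex of $A_2$. *)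

theory Defs
  imports Complex_Main "HOL-Library.Disjoint_Sets"
begin

definition simple_graph :: "'a set \<Rightarrow> 'a set set \<Rightarrow> bool" where
  "simple_graph V E \<longleftrightarrow> finite V \<and> (\<forall>e\<in>E. e \<subseteq> V \<and> card e = 2)"

definition degree :: "'a set set \<Rightarrow> 'a \<Rightarrow> nat" where
  "degree E v = card {e\<in>E. v \<in> e}"

definition min_degree :: "'a set \<Rightarrow> 'a set set \<Rightarrow> nat" where
  "min_degree V E = Min (degree E ` V)"

definition max_degree :: "'a set \<Rightarrow> 'a set set \<Rightarrow> nat" where
  "max_degree V E = Max (degree E ` V)"

definition clique_copy :: "'a set \<Rightarrow> 'a set set \<Rightarrow> nat \<Rightarrow> 'a set \<Rightarrow> bool" where
  "clique_copy V E l A \<longleftrightarrow> A \<subseteq> V \<and> card A = l \<and>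
     (\<forall>x\<in>A. \<forall>y\<in>A. x \<noteq> y \<longrightarrow> {x, y} \<in> E)"

definition alt_bag :: "'a set set \<Rightarrow> 'a set set \<Rightarrow> 'a set \<Rightarrow> 'a set \<Rightarrow> bool" where
  "alt_bag E2 E3 A1 A2 \<longleftrightarrow>
     (\<exists>e2\<in>E2. \<exists>e3\<in>E3. e2 \<inter> e3 = {} \<and>
        (\<exists>x\<in>A1. \<exists>y\<in>A2. e2 = {x, y}) \<and> (\<exists>x\<in>A1. \<exists>y\<in>A2. e3 = {x, y}))"

end

theory Submission
  imports Defs
begin

text \<open>Consider families of \<open>c = m div l\<close> pairwise disjoint \<open>G\<^sub>1\<close>-cliques ("slots") of size at
  most \<open>l\<close>, no two of which form an alternating bag, and take one covering as many vertices as
  possible. A vertex \<open>u\<close> can only be kept out of a slot by a vertex \<open>b\<close> of that slot in conflict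
  with \<open>u\<close>: a non-neighbour in \<open>G\<^sub>1\<close>, or a vertex such that an \<open>E\<^sub>2\<close>-edge at one of \<open>u, b\<close>
  and an \<open>E\<^sub>3\<close>-edge at the other have their far ends in a common slot. Every vertex has at most
  \<open>T = (m - 1 - \<delta>\<^sub>1) + 2 l \<Delta>\<^sub>2 \<Delta>\<^sub>3\<close> conflicts, and the hypotheses give \<open>c \<ge> 2 T + 2\<close>. If some
  slot is not full, an uncovered vertex \<open>y\<close> either enters a non-full slot directly, or counting
  conflicts yields a full slot open to \<open>y\<close> containing a \<open>G\<^sub>1\<close>-neighbour \<open>w\<close> of \<open>y\<close> that can
  move to the non-full slot; moving \<open>w\<close> and then \<open>y\<close> covers more vertices, contradicting
  maximality.\<close>

definition nbrs :: "'a set set \<Rightarrow> 'a \<Rightarrow> 'a set" where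
  "nbrs E u = {v. {u, v} \<in> E}"

lemma nbrs_subset: "simple_graph V E \<Longrightarrow> nbrs E u \<subseteq> V"
  unfolding simple_graph_def nbrs_def by auto

lemma finite_nbrs: "simple_graph V E \<Longrightarrow> finite (nbrs E u)"
  using nbrs_subset finite_subset unfolding simple_graph_def by metis

lemma simple_graph_edge_neq: "simple_graph V E \<Longrightarrow> {u, v} \<in> E \<Longrightarrow> u \<noteq> v"
  unfolding simple_graph_def by fastforce

lemma degree_eq_card_nbrs:
  assumes G: "simple_graph V E"
  shows "degree E u = card (nbrs E u)"
proof -
  have "bij_betw (\<lambda>v. {u, v}) (nbrs E u) {e\<in>E. u \<in> e}"
  proof (rule bij_betwI')
    fix e assume e: "e \<in> {e\<in>E. u \<in> e}"
    then have "card e = 2" using G unfolding simple_graph_def by auto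
    then obtain x y where "e = {x, y}" "x \<noteq> y" by (auto simp: card_2_iff)
    with e show "\<exists>v\<in>nbrs E u. e = {u, v}"
      unfolding nbrs_def by (auto simp: insert_commute)
  qed (auto simp: nbrs_def doubleton_eq_iff)
  then show ?thesis
    unfolding degree_def by (rule bij_betw_same_card[symmetric])
qed

lemma card_nbrs_le_max_degree:
  assumes G: "simple_graph V E" and "V \<noteq> {}"
  shows "card (nbrs E u) \<le> max_degree V E"
proof (cases "u \<in> V")
  case True
  then show ?thesis
    using G unfolding max_degree_def degree_eq_card_nbrs[OF G, symmetric] simple_graph_def
    by (intro Max_ge) auto
next
  case False
  then have "nbrs E u = {}"
    using G unfolding simple_graph_def nbrs_def by auto
  then show ?thesis by simp
qed

lemma min_degree_le_degree:
  "simple_graph V E \<Longrightarrow> u \<in> V \<Longrightarrow> min_degree V E \<le> degree E u"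
  unfolding min_degree_def simple_graph_def by (intro Min_le) auto

lemma card_non_nbrs_add_degree:
  assumes G: "simple_graph V E" and u: "u \<in> V"
  shows "card {v\<in>V. v \<noteq> u \<and> {u, v} \<notin> E} + degree E u = card V - 1"
proof -
  have fin: "finite V" using G unfolding simple_graph_def by blast
  have sub: "nbrs E u \<subseteq> V - {u}"
    using nbrs_subset[OF G] simple_graph_edge_neq[OF G] unfolding nbrs_def by blast
  have "{v\<in>V. v \<noteq> u \<and> {u, v} \<notin> E} = (V - {u}) - nbrs E u"
    unfolding nbrs_def by blast
  then have "card {v\<in>V. v \<noteq> u \<and> {u, v} \<notin> E} = card (V - {u}) - card (nbrs E u)"
    using sub fin by (simp add: card_Diff_subset finite_subset)
  moreover have "card (nbrs E u) \<le> card (V - {u})"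
    using sub fin by (intro card_mono) auto
  ultimately show ?thesis
    using u fin by (simp add: degree_eq_card_nbrs[OF G])
qed

lemma alt_bagI:
  assumes "{x, y} \<in> E2" "{x', y'} \<in> E3" "{x, y} \<inter> {x', y'} = {}"
    and "x \<in> A" "x' \<in> A" "y \<in> B" "y' \<in> B"
  shows "alt_bag E2 E3 A B"
  unfolding alt_bag_def using assms by blast

lemma alt_bagE:
  assumes "alt_bag E2 E3 A B"
  obtains x y x' y' where "{x, y} \<in> E2" "{x', y'} \<in> E3" "{x, y} \<inter> {x', y'} = {}"
    and "x \<in> A" "x' \<in> A" "y \<in> B" "y' \<in> B"
  using assms unfolding alt_bag_def by blast

lemma alt_bag_mono:
  assumes "alt_bag E2 E3 A B" "A \<subseteq> A'" "B \<subseteq> B'"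
  shows "alt_bag E2 E3 A' B'"
  using assms(1) by (rule alt_bagE) (use assms(2,3) in \<open>blast intro: alt_bagI\<close>)

lemma alt_bag_swap:
  assumes "alt_bag E2 E3 A B"
  shows "alt_bag E2 E3 B A"
proof -
  obtain x y x' y' where "{x, y} \<in> E2" "{x', y'} \<in> E3" "{x, y} \<inter> {x', y'} = {}"
    and "x \<in> A" "x' \<in> A" "y \<in> B" "y' \<in> B"
    using assms by (rule alt_bagE)
  then show ?thesis by (intro alt_bagI[of y x _ y' x']) (auto simp: insert_commute)
qed

lemma alt_bag_insert_right:
  assumes "alt_bag E2 E3 A (insert w B)" and "\<forall>a\<in>A. {a, w} \<notin> E2 \<and> {a, w} \<notin> E3"
  shows "alt_bag E2 E3 A B"
  using assms(1) by (rule alt_bagE) (use assms(2) in \<open>blast intro: alt_bagI\<close>)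

lemma card_UN_le_mult:
  assumes "finite I" "card I \<le> a" "\<And>i. i \<in> I \<Longrightarrow> card (A i) \<le> b"
  shows "card (\<Union>i\<in>I. A i) \<le> a * b"
proof -
  have "card (\<Union>i\<in>I. A i) \<le> (\<Sum>i\<in>I. card (A i))" by (rule card_UN_le[OF assms(1)])
  also have "\<dots> \<le> card I * b" using sum_bounded_above[of I "\<lambda>i. card (A i)" b] assms(3) by simp
  also have "\<dots> \<le> a * b" using assms(2) by simp
  finally show ?thesis .
qed

lemma slot_count_bound:
  fixes l m \<delta> s P :: nat
  assumes l: "l \<ge> 2" and s: "s + \<delta> + 1 \<le> m"
    and \<delta>: "real m * real (3 * l - 1) / real (3 * l) \<le> real \<delta>"
    and P: "real P \<le> (real m - 3) / (15 * real l ^ 2)"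
  shows "2 * (s + 2 * l * P) + 2 \<le> m div l"
proof -
  have lr: "real l \<ge> 2" using l by simp
  have "real m * real (3 * l - 1) / real (3 * l) = real m - real m / (3 * real l)"
    using lr by (simp add: field_simps)
  then have "real s + 1 \<le> real m / (3 * real l)"
    using \<delta> s by linarith
  then have h1: "real l * (real s + 1) \<le> real m / 3"
    using lr by (simp add: field_simps)
  have h2: "15 * (real l ^ 2 * real P) \<le> real m - 3"
    using P lr by (simp add: field_simps)
  have "real ((2 * (s + 2 * l * P) + 2) * l) = 2 * (real l * (real s + 1)) + 4 * (real l ^ 2 * real P)"
    by (simp add: algebra_simps power2_eq_square)
  also have "\<dots> \<le> real m" using h1 h2 by linarith
  finally have "(2 * (s + 2 * l * P) + 2) * l \<le> m"
    by (simp only: of_nat_le_iff)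
  then show ?thesis
    using l by (simp add: less_eq_div_iff_mult_less_eq)
qed

locale clique_packing =
  fixes V :: "'a set" and E1 E2 E3 :: "'a set set" and l c s d2 d3 :: nat
  assumes simple1: "simple_graph V E1" and simple2: "simple_graph V E2"
    and simple3: "simple_graph V E3"
    and disjoint12: "E1 \<inter> E2 = {}" and disjoint13: "E1 \<inter> E3 = {}"
    and slots_fit: "c * l \<le> card V"
    and card_non_nbrs_le: "\<And>u. u \<in> V \<Longrightarrow> card {v\<in>V. v \<noteq> u \<and> {u, v} \<notin> E1} \<le> s"
    and card_nbrs2_le: "\<And>u. card (nbrs E2 u) \<le> d2"
    and card_nbrs3_le: "\<And>u. card (nbrs E3 u) \<le> d3"
begin

definition non_nbrs :: "'a \<Rightarrow> 'a set" where
  "non_nbrs u = {v\<in>V. v \<noteq> u \<and> {u, v} \<notin> E1}"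

definition partial_packing :: "(nat \<Rightarrow> 'a set) \<Rightarrow> bool" where
  "partial_packing S \<longleftrightarrow>
     (\<forall>i<c. S i \<subseteq> V \<and> card (S i) \<le> l \<and> (\<forall>x\<in>S i. \<forall>y\<in>S i. x \<noteq> y \<longrightarrow> {x, y} \<in> E1)) \<and>
     (\<forall>i<c. \<forall>j<c. i \<noteq> j \<longrightarrow> S i \<inter> S j = {} \<and> \<not> alt_bag E2 E3 (S i) (S j))"

definition covered :: "(nat \<Rightarrow> 'a set) \<Rightarrow> 'a set" where
  "covered S = (\<Union>k<c. S k)"

definition move :: "(nat \<Rightarrow> 'a set) \<Rightarrow> 'a \<Rightarrow> nat \<Rightarrow> nat \<Rightarrow> 'a set" where
  "move S u j = (\<lambda>k. if k = j then insert u (S k) else S k - {u})"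

definition insertable :: "(nat \<Rightarrow> 'a set) \<Rightarrow> 'a \<Rightarrow> nat \<Rightarrow> bool" where
  "insertable S u j \<longleftrightarrow> (\<forall>b\<in>S j. b \<noteq> u \<longrightarrow> {u, b} \<in> E1) \<and>
     (\<forall>k<c. k \<noteq> j \<longrightarrow> \<not> alt_bag E2 E3 (insert u (S j)) (S k - {u}))"

definition slot_of :: "(nat \<Rightarrow> 'a set) \<Rightarrow> 'a \<Rightarrow> 'a set" where
  "slot_of S z = \<Union>{S k |k. k < c \<and> z \<in> S k}"

text \<open>By symmetry of the two unions, \<open>b \<in> bag_partners S u\<close> iff \<open>u \<in> bag_partners S b\<close>.\<close>
definition bag_partners :: "(nat \<Rightarrow> 'a set) \<Rightarrow> 'a \<Rightarrow> 'a set" where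
  "bag_partners S u =
     (\<Union>z\<in>nbrs E2 u. \<Union>z'\<in>slot_of S z. nbrs E3 z') \<union> (\<Union>z\<in>nbrs E3 u. \<Union>z'\<in>slot_of S z. nbrs E2 z')"

definition conflicts :: "(nat \<Rightarrow> 'a set) \<Rightarrow> 'a \<Rightarrow> 'a set" where
  "conflicts S u = non_nbrs u \<union> bag_partners S u"

definition conflict_bound :: nat where
  "conflict_bound = s + 2 * l * d2 * d3"

lemma finite_V: "finite V"
  using simple1 unfolding simple_graph_def by blast

lemma partial_packing_subset: "partial_packing S \<Longrightarrow> i < c \<Longrightarrow> S i \<subseteq> V"
  unfolding partial_packing_def by blast

lemma finite_slot: "partial_packing S \<Longrightarrow> i < c \<Longrightarrow> finite (S i)"
  using partial_packing_subset finite_V finite_subset by blast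

lemma partial_packing_card_le: "partial_packing S \<Longrightarrow> i < c \<Longrightarrow> card (S i) \<le> l"
  unfolding partial_packing_def by blast

lemma partial_packing_edge:
  "partial_packing S \<Longrightarrow> i < c \<Longrightarrow> x \<in> S i \<Longrightarrow> y \<in> S i \<Longrightarrow> x \<noteq> y \<Longrightarrow> {x, y} \<in> E1"
  unfolding partial_packing_def by blast

lemma partial_packing_slot_eq:
  "partial_packing S \<Longrightarrow> i < c \<Longrightarrow> j < c \<Longrightarrow> x \<in> S i \<Longrightarrow> x \<in> S j \<Longrightarrow> i = j"
  unfolding partial_packing_def by blast

lemma partial_packing_no_bag:
  "partial_packing S \<Longrightarrow> i < c \<Longrightarrow> j < c \<Longrightarrow> i \<noteq> j \<Longrightarrow> \<not> alt_bag E2 E3 (S i) (S j)"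
  unfolding partial_packing_def by blast

lemma slot_of_eq: "partial_packing S \<Longrightarrow> k < c \<Longrightarrow> z \<in> S k \<Longrightarrow> slot_of S z = S k"
  unfolding slot_of_def using partial_packing_slot_eq by blast

lemma slot_of_uncovered: "z \<notin> covered S \<Longrightarrow> slot_of S z = {}"
  unfolding slot_of_def covered_def by blast

lemma finite_slot_of: "partial_packing S \<Longrightarrow> finite (slot_of S z)"
  by (cases "z \<in> covered S")
    (auto simp: covered_def slot_of_eq finite_slot slot_of_uncovered)

lemma card_slot_of_le: "partial_packing S \<Longrightarrow> card (slot_of S z) \<le> l"
  by (cases "z \<in> covered S")
    (auto simp: covered_def slot_of_eq partial_packing_card_le slot_of_uncovered)

lemma card_bag_partners_le:
  assumes P: "partial_packing S"
  shows "card (bag_partners S u) \<le> 2 * l * d2 * d3"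
proof -
  have E2_E3: "card (\<Union>z\<in>nbrs E2 u. \<Union>z'\<in>slot_of S z. nbrs E3 z') \<le> d2 * (l * d3)"
    by (intro card_UN_le_mult finite_nbrs[OF simple2] card_nbrs2_le card_UN_le_mult
        finite_slot_of[OF P] card_slot_of_le[OF P] card_nbrs3_le)
  have E3_E2: "card (\<Union>z\<in>nbrs E3 u. \<Union>z'\<in>slot_of S z. nbrs E2 z') \<le> d3 * (l * d2)"
    by (intro card_UN_le_mult finite_nbrs[OF simple3] card_nbrs3_le card_UN_le_mult
        finite_slot_of[OF P] card_slot_of_le[OF P] card_nbrs2_le)
  have "card (bag_partners S u) \<le> d2 * (l * d3) + d3 * (l * d2)"
    unfolding bag_partners_def by (intro order_trans[OF card_Un_le] add_mono E2_E3 E3_E2)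
  then show ?thesis by (simp add: algebra_simps)
qed

lemma finite_conflicts: "partial_packing S \<Longrightarrow> finite (conflicts S u)"
  unfolding conflicts_def non_nbrs_def bag_partners_def
  using finite_V finite_nbrs[OF simple2] finite_nbrs[OF simple3] finite_slot_of by auto

lemma card_conflicts_le:
  assumes "partial_packing S" and "u \<in> V"
  shows "card (conflicts S u) \<le> conflict_bound"
proof -
  have "card (conflicts S u) \<le> card (non_nbrs u) + card (bag_partners S u)"
    unfolding conflicts_def by (rule card_Un_le)
  then show ?thesis
    using card_non_nbrs_le[OF assms(2)] card_bag_partners_le[OF assms(1), of u]
    unfolding conflict_bound_def non_nbrs_def by linarith
qed

lemma not_insertable_conflict:
  assumes P: "partial_packing S" and u: "u \<in> V" and j: "j < c" and "\<not> insertable S u j"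
  obtains b where "b \<in> S j" "b \<in> conflicts S u" "u \<in> conflicts S b"
proof (cases "\<forall>b\<in>S j. b \<noteq> u \<longrightarrow> {u, b} \<in> E1")
  case False
  then obtain b where b: "b \<in> S j" "b \<noteq> u" "{u, b} \<notin> E1" by blast
  then have "b \<in> non_nbrs u" "u \<in> non_nbrs b"
    using partial_packing_subset[OF P j] u unfolding non_nbrs_def by (auto simp: insert_commute)
  with b(1) show thesis using that unfolding conflicts_def by blast
next
  case True
  with assms(4) obtain k where k: "k < c" "k \<noteq> j"
    and bag: "alt_bag E2 E3 (insert u (S j)) (S k - {u})"
    unfolding insertable_def by blast
  obtain x y x' y' where e: "{x, y} \<in> E2" "{x', y'} \<in> E3" "{x, y} \<inter> {x', y'} = {}"
    and A: "x \<in> insert u (S j)" "x' \<in> insert u (S j)" and B: "y \<in> S k - {u}" "y' \<in> S k - {u}"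
    using bag by (rule alt_bagE)
  have slots: "y' \<in> slot_of S y" "y \<in> slot_of S y'"
    using B k unfolding slot_of_def by blast+
  consider "x = u" | "x' = u" | "x \<in> S j" "x' \<in> S j"
    using A by blast
  then show thesis
  proof cases
    case 1
    have "y \<in> nbrs E2 u" "x' \<in> nbrs E3 y'" "y' \<in> nbrs E3 x'" "u \<in> nbrs E2 y"
      using e 1 unfolding nbrs_def by (auto simp: insert_commute)
    then have "x' \<in> bag_partners S u" "u \<in> bag_partners S x'"
      using slots unfolding bag_partners_def by blast+
    moreover have "x' \<in> S j" using A e(3) 1 by blast
    ultimately show thesis using that unfolding conflicts_def by blast
  next
    case 2
    have "y' \<in> nbrs E3 u" "x \<in> nbrs E2 y" "y \<in> nbrs E2 x" "u \<in> nbrs E3 y'"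
      using e 2 unfolding nbrs_def by (auto simp: insert_commute)
    then have "x \<in> bag_partners S u" "u \<in> bag_partners S x"
      using slots unfolding bag_partners_def by blast+
    moreover have "x \<in> S j" using A e(3) 2 by blast
    ultimately show thesis using that unfolding conflicts_def by blast
  next
    case 3
    then have "alt_bag E2 E3 (S j) (S k)"
      using e B by (blast intro: alt_bagI)
    with partial_packing_no_bag[OF P j k(1)] k(2) show thesis by blast
  qed
qed

lemma card_slots_meeting_le:
  assumes P: "partial_packing S" and "finite A"
  shows "card {j. j < c \<and> S j \<inter> A \<noteq> {}} \<le> card A"
proof -
  let ?J = "{j. j < c \<and> S j \<inter> A \<noteq> {}}"
  define pick where "pick j = (SOME b. b \<in> S j \<inter> A)" for j
  have pick: "pick j \<in> S j \<inter> A" if "j \<in> ?J" for j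
  proof -
    have "\<exists>b. b \<in> S j \<inter> A" using that by blast
    then show ?thesis unfolding pick_def by (rule someI_ex)
  qed
  have "inj_on pick ?J"
  proof (rule inj_onI)
    fix i j assume "i \<in> ?J" "j \<in> ?J" "pick i = pick j"
    then show "i = j"
      using pick[of i] pick[of j] partial_packing_slot_eq[OF P, of i j "pick i"] by auto
  qed
  moreover have "pick ` ?J \<subseteq> A" using pick by blast
  ultimately show ?thesis using card_inj_on_le assms(2) by blast
qed

lemma card_not_insertable_slots_le:
  assumes P: "partial_packing S" and u: "u \<in> V"
  shows "card {j. j < c \<and> \<not> insertable S u j} \<le> conflict_bound"
proof -
  have "{j. j < c \<and> \<not> insertable S u j} \<subseteq> {j. j < c \<and> S j \<inter> conflicts S u \<noteq> {}}"
    using not_insertable_conflict[OF P u] by blast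
  then have "card {j. j < c \<and> \<not> insertable S u j} \<le> card {j. j < c \<and> S j \<inter> conflicts S u \<noteq> {}}"
    by (intro card_mono) auto
  also have "\<dots> \<le> card (conflicts S u)"
    by (rule card_slots_meeting_le[OF P finite_conflicts[OF P]])
  also have "\<dots> \<le> conflict_bound"
    by (rule card_conflicts_le[OF P u])
  finally show ?thesis .
qed

lemma card_not_insertable_vertices_le:
  assumes P: "partial_packing S" and i: "i < c"
  shows "card {w\<in>V. \<not> insertable S w i} \<le> card (S i) * conflict_bound"
proof -
  have "{w\<in>V. \<not> insertable S w i} \<subseteq> (\<Union>b\<in>S i. conflicts S b)"
    using not_insertable_conflict[OF P _ i] by blast
  then have "card {w\<in>V. \<not> insertable S w i} \<le> card (\<Union>b\<in>S i. conflicts S b)"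
    using finite_conflicts[OF P] finite_slot[OF P i] by (intro card_mono) auto
  also have "\<dots> \<le> card (S i) * conflict_bound"
    using finite_slot[OF P i] card_conflicts_le[OF P] partial_packing_subset[OF P i]
    by (intro card_UN_le_mult) auto
  finally show ?thesis .
qed

lemma partial_packing_move:
  assumes P: "partial_packing S" and j: "j < c" and u: "u \<in> V"
    and "card (S j) < l" and ins: "insertable S u j"
  shows "partial_packing (move S u j)"
  unfolding partial_packing_def
proof (intro conjI allI impI ballI)
  fix i assume i: "i < c"
  show "move S u j i \<subseteq> V"
    using partial_packing_subset[OF P i] u unfolding move_def by auto
  show "card (move S u j i) \<le> l"
    using assms(4) finite_slot[OF P j] partial_packing_card_le[OF P i] card_Diff1_le[of "S i" u]
    unfolding move_def by (auto simp: card_insert_if)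
  fix x y assume "x \<in> move S u j i" "y \<in> move S u j i" "x \<noteq> y"
  then show "{x, y} \<in> E1"
    using ins partial_packing_edge[OF P i] unfolding move_def insertable_def
    by (auto split: if_splits simp: insert_commute)
next
  fix p q assume p: "p < c" and q: "q < c" and pq: "p \<noteq> q"
  show "move S u j p \<inter> move S u j q = {}"
    using partial_packing_slot_eq[OF P p q] pq unfolding move_def by auto
  have no_bag_from_j: "\<not> alt_bag E2 E3 (move S u j j) (move S u j k)" if "k < c" "k \<noteq> j" for k
    using ins that unfolding insertable_def move_def by simp
  show "\<not> alt_bag E2 E3 (move S u j p) (move S u j q)"
  proof (cases "p = j \<or> q = j")
    case True
    with no_bag_from_j p q pq show ?thesis by (auto dest: alt_bag_swap)
  next
    case False
    then have "move S u j p \<subseteq> S p" "move S u j q \<subseteq> S q" unfolding move_def by auto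
    with partial_packing_no_bag[OF P p q pq] show ?thesis by (auto dest: alt_bag_mono)
  qed
qed

lemma covered_move: "j < c \<Longrightarrow> covered (move S u j) = insert u (covered S)"
  unfolding covered_def move_def by (auto split: if_splits)

lemma insertable_after_move:
  assumes P: "partial_packing S" and j: "j < c" and ij: "i \<noteq> j"
    and ins: "insertable S y j" and w: "w \<in> S j" and yw: "{y, w} \<in> E1"
  shows "insertable (move S w i) y j"
  unfolding insertable_def
proof (intro conjI allI impI)
  have slot_j: "move S w i j = S j - {w}" using ij unfolding move_def by simp
  show "\<forall>b\<in>move S w i j. b \<noteq> y \<longrightarrow> {y, b} \<in> E1"
    using ins unfolding slot_j insertable_def by blast
  fix k assume k: "k < c" "k \<noteq> j"
  let ?A = "insert y (S j - {w})"
  have "\<forall>a\<in>?A. {a, w} \<in> E1"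
    using yw partial_packing_edge[OF P j _ w] by (auto simp: insert_commute)
  then have no_edge_to_w: "\<forall>a\<in>?A. {a, w} \<notin> E2 \<and> {a, w} \<notin> E3"
    using disjoint12 disjoint13 by blast
  show "\<not> alt_bag E2 E3 (insert y (move S w i j)) (move S w i k - {y})"
  proof
    assume "alt_bag E2 E3 (insert y (move S w i j)) (move S w i k - {y})"
    then have "alt_bag E2 E3 ?A (insert w (S k - {y}))"
      unfolding slot_j by (rule alt_bag_mono) (auto simp: move_def)
    then have "alt_bag E2 E3 ?A (S k - {y})"
      using no_edge_to_w by (rule alt_bag_insert_right)
    then have "alt_bag E2 E3 (insert y (S j)) (S k - {y})"
      by (rule alt_bag_mono) auto
    with ins k show False unfolding insertable_def by blast
  qed
qed

lemma card_full_slots_le: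
  assumes P: "partial_packing S" and J: "J \<subseteq> {..<c}" and "finite B"
    and full: "\<And>j. j \<in> J \<Longrightarrow> card (S j) = l \<and> S j \<subseteq> B"
  shows "card J * l \<le> card B"
proof -
  have finJ: "finite J" using J finite_subset by blast
  have "card J * l = (\<Sum>j\<in>J. card (S j))" using full by simp
  also have "\<dots> = card (\<Union>j\<in>J. S j)"
    using J finJ finite_slot[OF P] partial_packing_slot_eq[OF P]
    by (intro card_UN_disjoint[symmetric]) (auto simp: subset_iff disjoint_iff)
  also have "\<dots> \<le> card B"
    using full assms(3) by (intro card_mono) auto
  finally show ?thesis .
qed

lemma card_exchange_blockers_le:
  assumes P: "partial_packing S" and i: "i < c" "card (S i) < l" and y: "y \<in> V"
  shows "card ({w\<in>V. \<not> insertable S w i} \<union> non_nbrs y) \<le> l * conflict_bound"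
proof -
  have "card ({w\<in>V. \<not> insertable S w i} \<union> non_nbrs y) \<le> card (S i) * conflict_bound + s"
    unfolding non_nbrs_def
    using card_not_insertable_vertices_le[OF P i(1)] card_non_nbrs_le[OF y]
    by (intro order_trans[OF card_Un_le] add_mono)
  also have "\<dots> \<le> (card (S i) + 1) * conflict_bound" by (simp add: conflict_bound_def)
  also have "\<dots> \<le> l * conflict_bound" using i(2) by (intro mult_right_mono) auto
  finally show ?thesis .
qed

lemma exists_exchange:
  assumes P: "partial_packing S" and i: "i < c" "card (S i) < l"
    and y: "y \<in> V" "y \<notin> covered S"
    and no_direct: "\<And>j. j < c \<Longrightarrow> card (S j) < l \<Longrightarrow> \<not> insertable S y j"
    and c_large: "2 * conflict_bound + 2 \<le> c"
  obtains j w where "j < c" "j \<noteq> i" "insertable S y j" "w \<in> S j" "{y, w} \<in> E1"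
    "insertable S w i"
proof -
  define Y where "Y = {j. j < c \<and> \<not> insertable S y j}"
  have card_Y: "card Y \<le> conflict_bound"
    unfolding Y_def by (rule card_not_insertable_slots_le[OF P y(1)])
  have full: "card (S j) = l" if "j < c" "j \<notin> Y" for j
    using that no_direct partial_packing_card_le[OF P] unfolding Y_def by fastforce
  define bad where "bad = {w\<in>V. \<not> insertable S w i} \<union> non_nbrs y"
  have fin_bad: "finite bad" unfolding bad_def non_nbrs_def using finite_V by auto
  have card_bad: "card bad \<le> l * conflict_bound"
    unfolding bad_def by (rule card_exchange_blockers_le[OF P i y(1)])
  define Z where "Z = {j\<in>{..<c} - Y. S j \<subseteq> bad}"
  have "card Z * l \<le> card bad"
    using full by (intro card_full_slots_le[OF P _ fin_bad]) (auto simp: Z_def)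
  then have "card Z * l \<le> l * conflict_bound"
    using card_bad by (rule order_trans)
  moreover have "0 < l" using i(2) by simp
  ultimately have card_Z: "card Z \<le> conflict_bound"
    by (simp add: mult.commute)
  have "\<not> {..<c} \<subseteq> Y \<union> Z"
  proof
    assume "{..<c} \<subseteq> Y \<union> Z"
    then have "c \<le> card (Y \<union> Z)"
      using card_mono[of "Y \<union> Z" "{..<c}"] unfolding Y_def Z_def by simp
    also have "\<dots> \<le> card Y + card Z" by (rule card_Un_le)
    finally show False using card_Y card_Z c_large by linarith
  qed
  then obtain j where j: "j < c" "j \<notin> Y" "j \<notin> Z" by blast
  then have "j \<noteq> i" using full i(2) by fastforce
  from j obtain w where w: "w \<in> S j" "w \<notin> bad" unfolding Z_def by blast
  have "w \<in> V" "w \<noteq> y"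
    using w(1) j(1) partial_packing_subset[OF P] y(2) unfolding covered_def by blast+
  then have "insertable S w i" "{y, w} \<in> E1"
    using w(2) unfolding bad_def non_nbrs_def by auto
  with j \<open>j \<noteq> i\<close> w(1) show thesis using that unfolding Y_def by blast
qed

lemma finite_covered: "partial_packing S \<Longrightarrow> finite (covered S)"
  unfolding covered_def using finite_slot by blast

lemma exists_uncovered:
  assumes P: "partial_packing S" and i: "i < c" "card (S i) < l"
  obtains y where "y \<in> V" "y \<notin> covered S"
proof -
  have "card (covered S) \<le> (\<Sum>k<c. card (S k))"
    unfolding covered_def by (rule card_UN_le) simp
  also have "\<dots> < (\<Sum>k<c. l)"
    using partial_packing_card_le[OF P] i by (intro sum_strict_mono_ex1) auto
  also have "\<dots> \<le> card V" using slots_fit by simp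
  finally have "\<not> V \<subseteq> covered S"
    using card_mono[OF finite_covered[OF P], of V] by linarith
  then show thesis using that by blast
qed

lemma exists_larger_packing:
  assumes P: "partial_packing S" and i: "i < c" "card (S i) < l"
    and c_large: "2 * conflict_bound + 2 \<le> c"
  obtains S' where "partial_packing S'" "card (covered S) < card (covered S')"
proof -
  obtain y where y: "y \<in> V" "y \<notin> covered S"
    using exists_uncovered[OF P i] .
  have grows: "card (covered S) < card (covered S')" if "covered S' = insert y (covered S)" for S'
    using that y(2) finite_covered[OF P] by simp
  show thesis
  proof (cases "\<exists>j<c. card (S j) < l \<and> insertable S y j")
    case True
    then obtain j where j: "j < c" "card (S j) < l" "insertable S y j" by blast
    show thesis
      using that partial_packing_move[OF P j(1) y(1) j(2,3)] grows[OF covered_move[OF j(1)]] .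
  next
    case False
    then obtain j w where j: "j < c" "j \<noteq> i" "insertable S y j"
      and w: "w \<in> S j" "{y, w} \<in> E1" "insertable S w i"
      using exists_exchange[OF P i y _ c_large] by blast
    define S1 where "S1 = move S w i"
    have w_V: "w \<in> V" using partial_packing_subset[OF P j(1)] w(1) by blast
    have P1: "partial_packing S1"
      unfolding S1_def by (rule partial_packing_move[OF P i(1) w_V i(2) w(3)])
    have "0 < card (S j)" using w(1) finite_slot[OF P j(1)] card_gt_0_iff by blast
    then have "card (S1 j) < l"
      using j(2) w(1) finite_slot[OF P j(1)] partial_packing_card_le[OF P j(1)]
      unfolding S1_def move_def by simp
    moreover have "insertable S1 y j"
      unfolding S1_def using insertable_after_move[OF P j(1) j(2)[symmetric] j(3) w(1,2)] .
    ultimately have "partial_packing (move S1 y j)"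
      by (rule partial_packing_move[OF P1 j(1) y(1)])
    moreover have "covered (move S1 y j) = insert y (covered S)"
      using w(1) j(1) unfolding S1_def covered_move[OF j(1)] covered_move[OF i(1)]
      by (auto simp: covered_def)
    ultimately show thesis using that grows by simp
  qed
qed

lemma exists_full_packing:
  assumes c_large: "2 * conflict_bound + 2 \<le> c"
  shows "\<exists>S. partial_packing S \<and> (\<forall>i<c. card (S i) = l)"
proof -
  have "partial_packing (\<lambda>_. {})"
    unfolding partial_packing_def alt_bag_def by auto
  moreover have "card (covered S) < card V + 1" if "partial_packing S" for S
  proof -
    have "covered S \<subseteq> V"
      using partial_packing_subset[OF that] unfolding covered_def by blast
    then show ?thesis using card_mono[OF finite_V] by (simp add: less_Suc_eq_le)
  qed
  ultimately obtain S where P: "partial_packing S"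
    and max: "\<And>S'. partial_packing S' \<Longrightarrow> card (covered S') \<le> card (covered S)"
    using ex_has_greatest_nat[of partial_packing _ "\<lambda>S. card (covered S)"] by blast
  have "card (S i) = l" if i: "i < c" for i
  proof (rule ccontr)
    assume "card (S i) \<noteq> l"
    then have "card (S i) < l" using partial_packing_card_le[OF P i] by simp
    then obtain S' where "partial_packing S'" "card (covered S) < card (covered S')"
      using exists_larger_packing[OF P i _ c_large] by blast
    with max show False by fastforce
  qed
  with P show ?thesis by blast
qed

lemma exists_clique_family:
  assumes l: "0 < l" and c_large: "2 * conflict_bound + 2 \<le> c"
  shows "\<exists>\<A>. finite \<A> \<and> card \<A> = c \<and> (\<forall>A\<in>\<A>. clique_copy V E1 l A) \<and> pairwise disjnt \<A> \<and>
           (\<forall>A1\<in>\<A>. \<forall>A2\<in>\<A>. A1 \<noteq> A2 \<longrightarrow> \<not> alt_bag E2 E3 A1 A2)"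
proof -
  obtain S where P: "partial_packing S" and full: "\<And>i. i < c \<Longrightarrow> card (S i) = l"
    using exists_full_packing[OF c_large] by blast
  have "inj_on S {..<c}"
  proof (rule inj_onI)
    fix i j assume i: "i \<in> {..<c}" and j: "j \<in> {..<c}" and "S i = S j"
    moreover obtain x where "x \<in> S i"
      using full[of i] i l by fastforce
    ultimately show "i = j" using partial_packing_slot_eq[OF P] by auto
  qed
  show ?thesis
  proof (intro exI[of _ "S ` {..<c}"] conjI ballI impI)
    show "finite (S ` {..<c})" by simp
    show "card (S ` {..<c}) = c" using \<open>inj_on S {..<c}\<close> by (simp add: card_image)
    show "clique_copy V E1 l A" if "A \<in> S ` {..<c}" for A
      using that full partial_packing_subset[OF P] partial_packing_edge[OF P]
      unfolding clique_copy_def by auto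
    show "pairwise disjnt (S ` {..<c})"
      using partial_packing_slot_eq[OF P] unfolding pairwise_def disjnt_def by auto
    show "\<not> alt_bag E2 E3 A1 A2" if "A1 \<in> S ` {..<c}" "A2 \<in> S ` {..<c}" "A1 \<noteq> A2" for A1 A2
      using that partial_packing_no_bag[OF P] by auto
  qed
qed

end

theorem theorem3p1:
  fixes V :: "'a set" and E1 E2 E3 :: "'a set set" and l m :: nat
  assumes "simple_graph V E1" and "simple_graph V E2" and "simple_graph V E3"
    and "card V = m"
    and "E1 \<inter> E2 = {}" and "E1 \<inter> E3 = {}"
    and "l \<ge> 2"
    and "real m * real (3 * l - 1) / real (3 * l) \<le> real (min_degree V E1)"
    and "real (max_degree V E2) * real (max_degree V E3) \<le> (real m - 3) / (15 * real l ^ 2)"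
  shows "\<exists>\<A>. finite \<A> \<and> card \<A> = m div l \<and> (\<forall>A\<in>\<A>. clique_copy V E1 l A) \<and>
           pairwise disjnt \<A> \<and>
           (\<forall>A1\<in>\<A>. \<forall>A2\<in>\<A>. A1 \<noteq> A2 \<longrightarrow> \<not> alt_bag E2 E3 A1 A2)"
proof (cases "V = {}")
  case True
  then show ?thesis using assms(4) by (intro exI[of _ "{}"]) simp
next
  case False
  define \<delta> where "\<delta> = min_degree V E1"
  define s where "s = m - 1 - \<delta>"
  have non_nbrs: "card {v\<in>V. v \<noteq> u \<and> {u, v} \<notin> E1} + \<delta> \<le> m - 1" if "u \<in> V" for u
    using card_non_nbrs_add_degree[OF assms(1) that] min_degree_le_degree[OF assms(1) that]
    unfolding \<delta>_def assms(4) by linarith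
  then have "card {v\<in>V. v \<noteq> u \<and> {u, v} \<notin> E1} \<le> s" if "u \<in> V" for u
    using that unfolding s_def by fastforce
  moreover have "m div l * l \<le> card V"
    using assms(4) by (simp add: div_times_less_eq_dividend)
  ultimately interpret clique_packing V E1 E2 E3 l "m div l" s "max_degree V E2" "max_degree V E3"
    using assms(1-3,5,6) card_nbrs_le_max_degree[OF assms(2) False]
      card_nbrs_le_max_degree[OF assms(3) False]
    by unfold_locales
  obtain u where "u \<in> V" using False by blast
  moreover have "0 < m"
    unfolding assms(4)[symmetric] using False finite_V by (simp add: card_gt_0_iff)
  ultimately have "s + \<delta> + 1 \<le> m"
    using non_nbrs unfolding s_def by fastforce
  then have "2 * conflict_bound + 2 \<le> m div l"
    using slot_count_bound[OF assms(7) _ assms(8)[folded \<delta>_def], of s "max_degree V E2 * max_degree V E3"]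
      assms(9) unfolding conflict_bound_def by (simp add: mult.assoc)
  then show ?thesis
    using exists_clique_family assms(7) by simp
qed

end
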